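(* Let $0<d<1$ and $c>0$ be constants. There is a constant $c'>0$ (depending only on $c,d$) such that the following holds. Let $m,n$ be positive integers with $n\leq m^d$ and $m\ge 2$, and suppose there is a scheme encoding every set $S\subseteq[m]$ with $|S|\leq n$ as a bit string $\phi(S)\in\{0,1\}^s$ with $s\leq c\,n\log_2 m$, together with a quantum bit-probe query algorithm that, given any query $i\in[m]$ and oracle access to $\phi(S)$, makes at most $t$ bit-probes and answers the question "$i\in S$?" either exactly, or with one-sided error (it always answers "No" when $i\notin S$, and when $i\in S$ it answers incorrectly with probability at most $\epsilon$ for some fixed $\epsilon<1$). Then $t\geq c'\log_2 m$. That is, set membership data structures using $O(n\log m)$ bits require $\Omega(\log m)$ bit-probes in this model.
   Context: $[m]=\{0,\dots,m-1\}$. Quantum bit-probe model: the algorithm operates on $\mathcal H_L\otimes\mathcal H_B\otimes\mathcal H_Z$ (address qubits indexing positions of the $s$-bit string, one data qubit, arbitrary workspace). For $x\in\{0,1\}^s$ the oracle $O_x$ acts by $|l\rangle|b\rangle|z\rangle\mapsto|l\rangle|b\oplus x_l\rangle|z\rangle$. A $t$-probe algorithm is a sequence of input-independent unitaries $U_0,\dots,U_t$; on query $i$ it starts from a fixed basis state encoding $i$, applies $U_tO_xU_{t-1}O_x\cdots U_1O_xU_0$, and measures designated output qubits in the computational basis to obtain its answer. *)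

theory Defs
  imports "HOL-Analysis.Analysis"
begin

(* The state space is H_L (x) H_B (x) H_Z with
  computational basis |l,b,z>, l < s (address), b :: bool (data qubit),
  z < w (workspace, of arbitrary finite dimension w).  A basis label is a
  triple (l,b,z); vectors are functions from labels to complex amplitudes and
  operators are matrices indexed by labels, both restricted to the basis set. *)

type_synonym blabel = "nat \<times> bool \<times> nat"

definition qbasis :: "nat \<Rightarrow> nat \<Rightarrow> blabel set" where
  "qbasis s w = {..<s} \<times> (UNIV :: bool set) \<times> {..<w}"

(* A matrix U (entries U i j) is unitary on the space spanned by qbasis s w
  (U^* U = I; in finite dimension this is equivalent to unitarity). *)
definition is_unitary :: "nat \<Rightarrow> nat \<Rightarrow> (blabel \<Rightarrow> blabel \<Rightarrow> complex) \<Rightarrow> bool" where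
  "is_unitary s w U \<longleftrightarrow>
     (\<forall>j\<in>qbasis s w. \<forall>k\<in>qbasis s w.
        (\<Sum>i\<in>qbasis s w. cnj (U i j) * U i k) = (if j = k then 1 else 0))"

definition apply_op :: "nat \<Rightarrow> nat \<Rightarrow> (blabel \<Rightarrow> blabel \<Rightarrow> complex) \<Rightarrow> (blabel \<Rightarrow> complex) \<Rightarrow> (blabel \<Rightarrow> complex)" where
  "apply_op s w U v = (\<lambda>i. \<Sum>j\<in>qbasis s w. U i j * v j)"

(* Oracle O_x : |l,b,z> to |l, b xor x_l, z>, where x :: nat \<Rightarrow> bool gives the
  bits x_0,...,x_{s-1} (only l < s is ever used). *)
definition probe_op :: "(nat \<Rightarrow> bool) \<Rightarrow> (blabel \<Rightarrow> complex) \<Rightarrow> (blabel \<Rightarrow> complex)" where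
  "probe_op x v = (\<lambda>(l, b, z). v (l, b \<noteq> x l, z))"

definition basis_vec :: "blabel \<Rightarrow> (blabel \<Rightarrow> complex)" where
  "basis_vec q = (\<lambda>i. if i = q then 1 else 0)"

(* Final state U_t O_x U_{t-1} ... U_1 O_x U_0 |q>, where Us = [U_1,...,U_t];
  the number of probes is length Us. *)
definition final_state :: "nat \<Rightarrow> nat \<Rightarrow> (blabel \<Rightarrow> blabel \<Rightarrow> complex) \<Rightarrow>
    (blabel \<Rightarrow> blabel \<Rightarrow> complex) list \<Rightarrow> (nat \<Rightarrow> bool) \<Rightarrow> blabel \<Rightarrow> (blabel \<Rightarrow> complex)" where
  "final_state s w U0 Us x q =
     foldl (\<lambda>v U. apply_op s w U (probe_op x v)) (apply_op s w U0 (basis_vec q)) Us"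

(* Probability that measuring the final state in the computational basis
  yields an outcome in Acc (outcomes answered "Yes"). *)
definition accept_prob :: "nat \<Rightarrow> nat \<Rightarrow> (blabel \<Rightarrow> blabel \<Rightarrow> complex) \<Rightarrow>
    (blabel \<Rightarrow> blabel \<Rightarrow> complex) list \<Rightarrow> blabel set \<Rightarrow> (nat \<Rightarrow> bool) \<Rightarrow> blabel \<Rightarrow> real" where
  "accept_prob s w U0 Us Acc x q =
     (\<Sum>i\<in>qbasis s w \<inter> Acc. (cmod (final_state s w U0 Us x q i))\<^sup>2)"

end

theory Submission
  imports Defs "HOL-Library.Function_Algebras"
begin

text \<open>The polynomial method. Each probe raises the degree of the amplitudes, as functions of
  the bits of \<open>\<phi>(S)\<close>, by at most one, so every acceptance probability is a polynomial of
  degree at most \<open>2t\<close> in the \<open>s\<close> bits. For a set \<open>T\<close> of size \<open>n\<close>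
  the product of the acceptance probabilities of the members of \<open>T\<close> is a polynomial \<open>Q\<^sub>T\<close>
  of degree at most \<open>2tn\<close>, and by one-sidedness \<open>Q\<^sub>T(\<phi>(T'))\<close> is nonzero iff \<open>T = T'\<close>.
  So the \<open>Q\<^sub>T\<close> are linearly independent, and \<open>(m/n)\<^sup>n \<le> (m choose n)\<close> is at most the
  number of monomials of degree \<open>\<le> 2tn\<close> in \<open>s\<close> variables, which is at most
  \<open>(1+y)\<^sup>s / y\<^sup>2\<^sup>t\<^sup>n\<close> for every \<open>0 < y \<le> 1\<close>. With \<open>n \<le> m\<^sup>d\<close>, \<open>s \<le> c n log m\<close> and \<open>y\<close> small
  enough in terms of \<open>c, d\<close>, taking logarithms gives \<open>t = \<Omega>(log m)\<close>.\<close>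

definition bit_monomial :: "nat set \<Rightarrow> (nat \<Rightarrow> bool) \<Rightarrow> complex" where
  "bit_monomial A x = (if \<forall>l\<in>A. x l then 1 else 0)"

definition low_degree_sets :: "nat \<Rightarrow> nat \<Rightarrow> nat set set" where
  "low_degree_sets s k = {A. A \<subseteq> {..<s} \<and> card A \<le> k}"

definition bit_poly :: "nat \<Rightarrow> nat \<Rightarrow> ((nat \<Rightarrow> bool) \<Rightarrow> complex) \<Rightarrow> bool" where
  "bit_poly s k f \<longleftrightarrow>
     (\<exists>a. \<forall>x. f x = (\<Sum>A\<in>low_degree_sets s k. a A * bit_monomial A x))"

lemma finite_low_degree_sets: "finite (low_degree_sets s k)"
  unfolding low_degree_sets_def by (rule finite_subset[of _ "Pow {..<s}"]) auto

lemma low_degree_sets_mono: "k \<le> k' \<Longrightarrow> low_degree_sets s k \<subseteq> low_degree_sets s k'"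
  by (auto simp: low_degree_sets_def)

lemma bit_monomial_mult: "bit_monomial A x * bit_monomial B x = bit_monomial (A \<union> B) x"
  by (auto simp: bit_monomial_def)

lemma bit_poly_monomial:
  assumes "A \<in> low_degree_sets s k"
  shows "bit_poly s k (\<lambda>x. a * bit_monomial A x)"
  unfolding bit_poly_def
proof (intro exI allI)
  fix x
  have "(\<Sum>B\<in>low_degree_sets s k. (if B = A then a else 0) * bit_monomial B x)
      = (\<Sum>B\<in>low_degree_sets s k. if B = A then a * bit_monomial A x else 0)"
    by (intro sum.cong) auto
  also have "\<dots> = a * bit_monomial A x"
    using assms by (simp add: finite_low_degree_sets)
  finally show "a * bit_monomial A x
      = (\<Sum>B\<in>low_degree_sets s k. (if B = A then a else 0) * bit_monomial B x)" by simp
qed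

lemma bit_poly_const: "bit_poly s k (\<lambda>x. a)"
  using bit_poly_monomial[of "{}" s k a] by (simp add: low_degree_sets_def bit_monomial_def)

lemma bit_poly_add:
  assumes "bit_poly s k f" "bit_poly s k g"
  shows "bit_poly s k (\<lambda>x. f x + g x)"
proof -
  obtain a b where
    "\<And>x. f x = (\<Sum>A\<in>low_degree_sets s k. a A * bit_monomial A x)"
    "\<And>x. g x = (\<Sum>A\<in>low_degree_sets s k. b A * bit_monomial A x)"
    using assms unfolding bit_poly_def by blast
  then show ?thesis
    unfolding bit_poly_def
    by (intro exI[of _ "\<lambda>A. a A + b A"]) (simp add: distrib_right sum.distrib)
qed

lemma bit_poly_sum:
  "finite I \<Longrightarrow> (\<And>i. i \<in> I \<Longrightarrow> bit_poly s k (f i)) \<Longrightarrow> bit_poly s k (\<lambda>x. \<Sum>i\<in>I. f i x)"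
  by (induction I rule: finite_induct) (auto intro: bit_poly_add bit_poly_const)

lemma bit_poly_cmult:
  assumes "bit_poly s k f"
  shows "bit_poly s k (\<lambda>x. c * f x)"
proof -
  obtain a where "\<And>x. f x = (\<Sum>A\<in>low_degree_sets s k. a A * bit_monomial A x)"
    using assms unfolding bit_poly_def by blast
  then show ?thesis
    unfolding bit_poly_def
    by (intro exI[of _ "\<lambda>A. c * a A"]) (simp add: sum_distrib_left mult.assoc)
qed

lemma bit_poly_cnj:
  assumes "bit_poly s k f"
  shows "bit_poly s k (\<lambda>x. cnj (f x))"
proof -
  obtain a where "\<And>x. f x = (\<Sum>A\<in>low_degree_sets s k. a A * bit_monomial A x)"
    using assms unfolding bit_poly_def by blast
  moreover have "cnj (bit_monomial A x) = bit_monomial A x" for A x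
    by (simp add: bit_monomial_def)
  ultimately show ?thesis
    unfolding bit_poly_def by (intro exI[of _ "\<lambda>A. cnj (a A)"]) simp
qed

lemma bit_poly_mult:
  assumes "bit_poly s k1 f" "bit_poly s k2 g"
  shows "bit_poly s (k1 + k2) (\<lambda>x. f x * g x)"
proof -
  obtain a b where
    a: "\<And>x. f x = (\<Sum>A\<in>low_degree_sets s k1. a A * bit_monomial A x)" and
    b: "\<And>x. g x = (\<Sum>B\<in>low_degree_sets s k2. b B * bit_monomial B x)"
    using assms unfolding bit_poly_def by blast
  have expand: "f x * g x = (\<Sum>A\<in>low_degree_sets s k1. \<Sum>B\<in>low_degree_sets s k2.
                               (a A * b B) * bit_monomial (A \<union> B) x)" for x
    unfolding a b sum_product
    by (intro sum.cong refl) (simp add: bit_monomial_mult[symmetric] algebra_simps)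
  have "bit_poly s (k1 + k2) (\<lambda>x. \<Sum>A\<in>low_degree_sets s k1. \<Sum>B\<in>low_degree_sets s k2.
                               (a A * b B) * bit_monomial (A \<union> B) x)"
  proof (intro bit_poly_sum finite_low_degree_sets bit_poly_monomial)
    fix A B assume "A \<in> low_degree_sets s k1" "B \<in> low_degree_sets s k2"
    then show "A \<union> B \<in> low_degree_sets s (k1 + k2)"
      unfolding low_degree_sets_def using card_Un_le[of A B] by auto
  qed
  then show ?thesis
    unfolding expand .
qed

lemma bit_poly_prod:
  "finite T \<Longrightarrow> (\<And>i. i \<in> T \<Longrightarrow> bit_poly s k (f i)) \<Longrightarrow>
   bit_poly s (k * card T) (\<lambda>x. \<Prod>i\<in>T. f i x)"
proof (induction T rule: finite_induct)
  case empty
  then show ?case by (simp add: bit_poly_const)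
next
  case (insert a T)
  have "bit_poly s (k + k * card T) (\<lambda>x. f a x * (\<Prod>i\<in>T. f i x))"
    using insert by (intro bit_poly_mult) auto
  then show ?case
    using insert by (simp add: add.commute)
qed

lemma bit_poly_probe_op:
  assumes "\<And>j. bit_poly s k (\<lambda>x. v x j)" and "j \<in> qbasis s w"
  shows "bit_poly s (k + 1) (\<lambda>x. probe_op x (v x) j)"
proof -
  obtain l b z where j: "j = (l, b, z)" by (cases j)
  with assms(2) have "{l} \<in> low_degree_sets s 1"
    by (simp add: qbasis_def low_degree_sets_def)
  then have bit: "bit_poly s 1 (\<lambda>x. a * bit_monomial {l} x)" for a
    by (rule bit_poly_monomial)
  have probe: "probe_op x (v x) j
      = bit_monomial {l} x * v x (l, \<not> b, z) + (1 + (-1) * bit_monomial {l} x) * v x (l, b, z)" for x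
    by (simp add: probe_op_def j bit_monomial_def)
  have "bit_poly s (1 + k) (\<lambda>x. bit_monomial {l} x * v x (l, \<not> b, z)
                              + (1 + (-1) * bit_monomial {l} x) * v x (l, b, z))"
    using bit[of 1] bit[of "-1"]
    by (intro bit_poly_add bit_poly_mult bit_poly_const assms(1)) simp_all
  then show ?thesis
    unfolding probe by (simp add: add.commute)
qed

lemma bit_poly_probe_steps:
  assumes "\<And>j. bit_poly s k (\<lambda>x. v x j)"
  shows "bit_poly s (k + length Us) (\<lambda>x. foldl (\<lambda>v U. apply_op s w U (probe_op x v)) (v x) Us j)"
  using assms
proof (induction Us arbitrary: v k j)
  case Nil
  then show ?case by simp
next
  case (Cons U Us)
  have "bit_poly s (k + 1) (\<lambda>x. apply_op s w U (probe_op x (v x)) j)" for j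
    unfolding apply_op_def
    by (intro bit_poly_sum bit_poly_cmult bit_poly_probe_op Cons.prems) (auto simp: qbasis_def)
  from Cons.IH[OF this] show ?case by simp
qed

lemma bit_poly_final_state: "bit_poly s (length Us) (\<lambda>x. final_state s w U0 Us x q j)"
  using bit_poly_probe_steps[where k = 0 and v = "\<lambda>x. apply_op s w U0 (basis_vec q)"]
  by (simp add: final_state_def bit_poly_const)

lemma bit_poly_accept_prob:
  "bit_poly s (2 * length Us) (\<lambda>x. complex_of_real (accept_prob s w U0 Us Acc x q))"
proof -
  let ?a = "\<lambda>x i. final_state s w U0 Us x q i"
  have prob: "complex_of_real (accept_prob s w U0 Us Acc x q)
      = (\<Sum>i\<in>qbasis s w \<inter> Acc. ?a x i * cnj (?a x i))" for x
    unfolding accept_prob_def of_real_sum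
    by (intro sum.cong refl) (simp add: complex_norm_square[symmetric])
  have "bit_poly s (length Us + length Us) (\<lambda>x. \<Sum>i\<in>qbasis s w \<inter> Acc. ?a x i * cnj (?a x i))"
    by (intro bit_poly_sum bit_poly_mult bit_poly_cnj bit_poly_final_state)
      (auto simp: qbasis_def)
  then show ?thesis
    unfolding prob by (simp add: mult_2)
qed

interpretation cfun: vector_space "\<lambda>(a::complex) (f::'a \<Rightarrow> complex) x. a * f x"
  by unfold_locales (auto simp: fun_eq_iff algebra_simps)

lemma sum_fun_apply: "(sum f I) x = (\<Sum>i\<in>I. f i x)"
  by (induction I rule: infinite_finite_induct) auto

lemma card_le_card_of_diagonal_in_span:
  fixes Q :: "'a \<Rightarrow> 'b \<Rightarrow> complex" and p :: "'a \<Rightarrow> 'b"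
  assumes "finite B" and span: "Q ` F \<subseteq> cfun.span B"
    and diag: "\<And>T. T \<in> F \<Longrightarrow> Q T (p T) \<noteq> 0"
    and off_diag: "\<And>T T'. T \<in> F \<Longrightarrow> T' \<in> F \<Longrightarrow> T \<noteq> T' \<Longrightarrow> Q T (p T') = 0"
  shows "card F \<le> card B"
proof -
  have "inj_on Q F"
    by (rule inj_onI) (metis diag off_diag)
  have "cfun.independent (Q ` F)"
    unfolding cfun.independent_explicit_finite_subsets
  proof (intro allI impI ballI)
    fix S u v
    assume S: "S \<subseteq> Q ` F" "finite S" and v: "v \<in> S"
      and zero: "(\<Sum>v\<in>S. (\<lambda>x. u v * v x)) = 0"
    then obtain T where T: "T \<in> F" "v = Q T" by auto
    have "0 = (\<Sum>v'\<in>S. u v' * v' (p T))"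
      using fun_cong[OF zero, of "p T"] by (simp add: sum_fun_apply)
    also have "\<dots> = u v * v (p T)"
    proof (rule sum.remove[OF S(2) v, THEN trans], simp, rule sum.neutral, intro ballI)
      fix v' assume "v' \<in> S - {v}"
      then obtain T' where "T' \<in> F" "v' = Q T'" "T' \<noteq> T" using S T by auto
      then show "u v' * v' (p T) = 0" using off_diag T by auto
    qed
    finally show "u v = 0" using diag T by simp
  qed
  then have "card (Q ` F) \<le> card B"
    using cfun.independent_span_bound[OF \<open>finite B\<close> _ span] by simp
  then show ?thesis
    using card_image[OF \<open>inj_on Q F\<close>] by simp
qed

lemma bit_poly_in_span:
  assumes "bit_poly s k f"
  shows "f \<in> cfun.span (bit_monomial ` low_degree_sets s k)"
proof -
  obtain a where a: "\<And>x. f x = (\<Sum>A\<in>low_degree_sets s k. a A * bit_monomial A x)"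
    using assms unfolding bit_poly_def by blast
  have "f = (\<Sum>A\<in>low_degree_sets s k. (\<lambda>x. a A * bit_monomial A x))"
    by (simp add: fun_eq_iff sum_fun_apply a)
  also have "\<dots> \<in> cfun.span (bit_monomial ` low_degree_sets s k)"
    by (intro cfun.span_sum cfun.span_scale cfun.span_base) auto
  finally show ?thesis .
qed

lemma card_low_degree_sets_le:
  assumes "0 < y" "y \<le> (1::real)"
  shows "real (card (low_degree_sets s k)) \<le> (1 + y) ^ s / y ^ k"
proof -
  have "real (card (low_degree_sets s k)) = (\<Sum>A\<in>low_degree_sets s k. 1)" by simp
  also have "\<dots> \<le> (\<Sum>A\<in>low_degree_sets s k. y ^ card A / y ^ k)"
  proof (intro sum_mono)
    fix A assume "A \<in> low_degree_sets s k"
    then have "y ^ k \<le> y ^ card A"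
      using assms by (intro power_decreasing) (auto simp: low_degree_sets_def)
    then show "1 \<le> y ^ card A / y ^ k" using assms by simp
  qed
  also have "\<dots> \<le> (\<Sum>A\<in>Pow {..<s}. y ^ card A / y ^ k)"
    using assms by (intro sum_mono2) (auto simp: low_degree_sets_def)
  also have "(\<Sum>A\<in>Pow {..<s}. y ^ card A) = (1 + y) ^ s"
    using prod_add[of "{..<s}" "\<lambda>_. y" "\<lambda>_. 1"] by (simp add: add.commute)
  then have "(\<Sum>A\<in>Pow {..<s}. y ^ card A / y ^ k) = (1 + y) ^ s / y ^ k"
    by (simp add: sum_divide_distrib[symmetric])
  finally show ?thesis .
qed

lemma le_of_le_powr:
  fixes m n :: nat and d :: real
  assumes "1 \<le> n" "real n \<le> real m powr d" "d \<le> 1"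
  shows "n \<le> m"
proof -
  have "0 < real m"
    using assms(1,2) by (cases "m = 0") auto
  then show ?thesis
    using assms powr_mono[of d 1 "real m"] by simp
qed

lemma ln_binomial_ge:
  fixes m n :: nat and d :: real
  assumes "1 \<le> n" "real n \<le> real m powr d" "d \<le> 1"
  shows "(1 - d) * real n * ln (real m) \<le> ln (real (m choose n))"
proof -
  have "n \<le> m"
    using assms by (rule le_of_le_powr)
  then have m: "0 < real m"
    using assms(1) by simp
  have ln_n: "ln (real n) \<le> d * ln (real m)"
    using assms m by (metis ln_le_cancel_iff ln_powr of_nat_0_less_iff less_le_trans
        zero_less_one powr_gt_zero)
  have "(1 - d) * real n * ln (real m) \<le> real n * (ln (real m) - ln (real n))"
    using mult_left_mono[OF ln_n, of "real n"] by (simp add: algebra_simps)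
  also have "\<dots> = ln ((real m / real n) ^ n)"
    using assms(1) m by (simp add: ln_realpow ln_div)
  also have "\<dots> \<le> ln (real (m choose n))"
    using binomial_ge_n_over_k_pow_k[OF \<open>n \<le> m\<close>] assms(1) m \<open>n \<le> m\<close>
    by (subst ln_le_cancel_iff) auto
  finally show ?thesis .
qed

lemma binomial_le_card_low_degree_sets:
  fixes \<phi> :: "nat set \<Rightarrow> nat \<Rightarrow> bool"
  assumes "\<epsilon> < 1"
    and correct: "\<forall>S. S \<subseteq> {..<m} \<and> card S \<le> n \<longrightarrow>
               (\<forall>i<m. (i \<notin> S \<longrightarrow> accept_prob s w U0 Us Acc (\<phi> S) (init i) = 0)
                    \<and> (i \<in> S \<longrightarrow> accept_prob s w U0 Us Acc (\<phi> S) (init i) \<ge> 1 - \<epsilon>))"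
  shows "m choose n \<le> card (low_degree_sets s (2 * length Us * n))"
proof -
  define F where "F = {T. T \<subseteq> {..<m} \<and> card T = n}"
  define Q where
    "Q T x = (\<Prod>i\<in>T. complex_of_real (accept_prob s w U0 Us Acc x (init i)))" for T x
  have F: "finite T" "T \<subseteq> {..<m}" "card T = n" if "T \<in> F" for T
    using that finite_subset unfolding F_def by auto
  have "card F \<le> card (bit_monomial ` low_degree_sets s (2 * length Us * n))"
  proof (rule card_le_card_of_diagonal_in_span[where p = \<phi> and Q = Q])
    show "Q ` F \<subseteq> cfun.span (bit_monomial ` low_degree_sets s (2 * length Us * n))"
    proof (intro image_subsetI bit_poly_in_span)
      fix T assume "T \<in> F"
      from bit_poly_prod[OF F(1)[OF this] bit_poly_accept_prob]
      show "bit_poly s (2 * length Us * n) (Q T)"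
        unfolding Q_def[abs_def] F(3)[OF \<open>T \<in> F\<close>] .
    qed
  next
    fix T assume T: "T \<in> F"
    have "accept_prob s w U0 Us Acc (\<phi> T) (init i) \<noteq> 0" if "i \<in> T" for i
    proof -
      have "accept_prob s w U0 Us Acc (\<phi> T) (init i) \<ge> 1 - \<epsilon>"
        using correct F(2,3)[OF T] that by blast
      then show ?thesis
        using \<open>\<epsilon> < 1\<close> by linarith
    qed
    then show "Q T (\<phi> T) \<noteq> 0"
      unfolding Q_def using F(1)[OF T] by simp
  next
    fix T T' assume T: "T \<in> F" and T': "T' \<in> F" and "T \<noteq> T'"
    then have "\<not> T \<subseteq> T'"
      using card_subset_eq[OF F(1)[OF T']] F(3)[OF T] F(3)[OF T'] by metis
    then obtain i where i: "i \<in> T" "i \<notin> T'" by blast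
    then have "i < m" using F(2)[OF T] by blast
    with i have "accept_prob s w U0 Us Acc (\<phi> T') (init i) = 0"
      using correct F(2,3)[OF T'] by blast
    then show "Q T (\<phi> T') = 0"
      unfolding Q_def using F(1)[OF T] i(1) by (auto simp: prod_zero_iff)
  qed (simp add: finite_low_degree_sets)
  also have "\<dots> \<le> card (low_degree_sets s (2 * length Us * n))"
    by (rule card_image_le[OF finite_low_degree_sets])
  finally show ?thesis
    using n_subsets[of "{..<m}" n] by (simp add: F_def)
qed

text \<open>The choice of \<open>y\<close> makes the monomial count \<open>(1+y)\<^sup>s\<close> contribute at most half of the
  entropy \<open>(1-d) n ln m\<close> of the \<open>n\<close>-subsets, so the factor \<open>y\<^sup>-\<^sup>2\<^sup>t\<^sup>n\<close> must cover the rest.\<close>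

lemma probe_bound_of_binomial_bound:
  fixes m n s t :: nat and c d y :: real
  assumes "d < 1" "0 < c" "0 < y" "y < 1" "y \<le> (1 - d) * ln 2 / (2 * c)"
    and "1 \<le> n" "2 \<le> m" "real n \<le> real m powr d" "real s \<le> c * real n * log 2 (real m)"
    and binom: "real (m choose n) \<le> (1 + y) ^ s / y ^ (2 * t * n)"
  shows "(1 - d) * ln 2 / (4 * ln (1 / y)) * log 2 (real m) \<le> real t"
proof -
  define L where "L = ln (real m)"
  have "L > 0" "ln (1 / y) > 0"
    using assms unfolding L_def by simp_all
  have "m choose n > 0"
    using le_of_le_powr[of n m d] assms by simp
  have "(1 - d) * real n * L \<le> ln (real (m choose n))"
    unfolding L_def using assms by (intro ln_binomial_ge) simp_all
  also have "\<dots> \<le> ln ((1 + y) ^ s / y ^ (2 * t * n))"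
    using binom \<open>m choose n > 0\<close> assms(3) by (subst ln_le_cancel_iff) auto
  also have "\<dots> = s * ln (1 + y) + 2 * t * n * ln (1 / y)"
    using assms(3) by (simp add: ln_div ln_realpow)
  also have "s * ln (1 + y) \<le> s * y"
    using assms(3) by (intro mult_left_mono ln_add_one_self_le_self) auto
  also have "s * y \<le> (c * real n * (L / ln 2)) * y"
    using assms(3,9) unfolding log_def L_def by (intro mult_right_mono) auto
  also have "(c * real n * (L / ln 2)) * y = real n * L * (c * y / ln 2)"
    by simp
  also have "\<dots> \<le> real n * L * ((1 - d) / 2)"
    using assms(2,5) \<open>L > 0\<close> by (intro mult_left_mono) (simp_all add: field_simps)
  finally have "(1 - d) * real n * L \<le> real n * L * ((1 - d) / 2) + 2 * real t * real n * ln (1 / y)"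
    by simp
  then have "real n * ((1 - d) * L / 2) \<le> real n * (2 * real t * ln (1 / y))"
    by argo
  then have "(1 - d) * L / 2 \<le> 2 * real t * ln (1 / y)"
    using assms(6) by simp
  then have bound: "(1 - d) * L / 2 / (2 * ln (1 / y)) \<le> real t"
    using \<open>ln (1 / y) > 0\<close> by (simp add: field_simps)
  have "(1 - d) * ln 2 / (4 * ln (1 / y)) * log 2 (real m)
      = (1 - d) * L / 2 / (2 * ln (1 / y))"
    unfolding log_def L_def by simp
  also note bound
  finally show ?thesis .
qed

theorem mainTheorem7:
  fixes d c :: real
  assumes "0 < d" and "d < 1" and "0 < c"
  shows "\<exists>c' > 0. \<forall>(m::nat) (n::nat) (s::nat) (t::nat) (\<epsilon>::real)
            (\<phi>::nat set \<Rightarrow> nat \<Rightarrow> bool) (w::nat)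
            (U0::blabel \<Rightarrow> blabel \<Rightarrow> complex) (Us::(blabel \<Rightarrow> blabel \<Rightarrow> complex) list)
            (init::nat \<Rightarrow> blabel) (Acc::blabel set).
          1 \<le> n \<and> 2 \<le> m \<and> real n \<le> real m powr d
          \<and> real s \<le> c * real n * log 2 (real m)
          \<and> 1 \<le> w
          \<and> is_unitary s w U0 \<and> (\<forall>U\<in>set Us. is_unitary s w U)
          \<and> (\<forall>i<m. init i \<in> qbasis s w)
          \<and> length Us \<le> t
          \<and> \<epsilon> < 1
          \<and> (\<forall>S. S \<subseteq> {..<m} \<and> card S \<le> n \<longrightarrow>
               (\<forall>i<m. (i \<notin> S \<longrightarrow> accept_prob s w U0 Us Acc (\<phi> S) (init i) = 0)
                    \<and> (i \<in> S \<longrightarrow> accept_prob s w U0 Us Acc (\<phi> S) (init i) \<ge> 1 - \<epsilon>)))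
          \<longrightarrow> c' * log 2 (real m) \<le> real t"
proof -
  define y where "y = min (1/2) ((1 - d) * ln 2 / (2 * c))"
  have y: "0 < y" "y < 1" "y \<le> (1 - d) * ln 2 / (2 * c)"
    using assms unfolding y_def by auto
  have pos: "(1 - d) * ln 2 / (4 * ln (1 / y)) > 0"
    using assms y by simp
  show ?thesis
  proof (rule exI[of _ "(1 - d) * ln 2 / (4 * ln (1 / y))"], intro conjI pos allI impI, elim conjE)
    fix m n s t :: nat and \<epsilon> :: real and \<phi> :: "nat set \<Rightarrow> nat \<Rightarrow> bool" and w Us U0 init Acc
    assume n: "1 \<le> n" and m: "2 \<le> m" and n_le: "real n \<le> real m powr d"
      and s: "real s \<le> c * real n * log 2 (real m)" and t: "length Us \<le> t" and "\<epsilon> < 1"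
      and correct: "\<forall>S. S \<subseteq> {..<m} \<and> card S \<le> n \<longrightarrow>
               (\<forall>i<m. (i \<notin> S \<longrightarrow> accept_prob s w U0 Us Acc (\<phi> S) (init i) = 0)
                    \<and> (i \<in> S \<longrightarrow> accept_prob s w U0 Us Acc (\<phi> S) (init i) \<ge> 1 - \<epsilon>))"
    have "m choose n \<le> card (low_degree_sets s (2 * length Us * n))"
      using \<open>\<epsilon> < 1\<close> correct by (rule binomial_le_card_low_degree_sets)
    also have "\<dots> \<le> card (low_degree_sets s (2 * t * n))"
      using t by (intro card_mono finite_low_degree_sets low_degree_sets_mono) simp
    finally have "real (m choose n) \<le> real (card (low_degree_sets s (2 * t * n)))"
      by (rule of_nat_mono)
    also have "\<dots> \<le> (1 + y) ^ s / y ^ (2 * t * n)"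
      using y by (intro card_low_degree_sets_le) simp_all
    finally show "(1 - d) * ln 2 / (4 * ln (1 / y)) * log 2 (real m) \<le> real t"
      by (rule probe_bound_of_binomial_bound[OF assms(2,3) y n m n_le s])
  qed
qed

end
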